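(* Let $\mathcal{G}=(\mathcal{P},\mathcal{L})$ be a Fischer space of symplectic type, let $R$ be a commutative ring with $2=0$, $A=M_R(\mathcal{G},1)$, and let $\ell=\{a,b,c\}$ be a line. Let $\mathcal{P}_0$ be the set of points not on $\ell$ and not collinear with any of $a,b,c$, and let $\mathcal{P}_2$ be the set of points collinear with exactly two points of $\ell$. Then $A=A^\ell_0\oplus A^\ell_1$, where $A^\ell_0,A^\ell_1$ are the eigenspaces of $\operatorname{ad}_\ell$ for eigenvalues $0$ and $1$, and \[ A^\ell_0=\langle a,b,c\rangle\oplus\langle \pi\mid \pi \text{ a complete quadrilateral with } \ell\subset\pi\rangle\oplus\langle w\mid w\in\mathcal{P}_0\rangle,\qquad A^\ell_1=\langle \ell z\mid z\in\mathcal{P}_2\rangle. \]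
   Context: A 3-transposition group is a pair $(G,D)$ where $D$ is a conjugacy class of involutions generating $G$ with $de$ of order at most $3$ for all $d,e\in D$. Its Fischer space $\mathcal{G}=(\mathcal{P},\mathcal{L})$ has $\mathcal{P}=D$ and as lines the $3$-subsets consisting of the three involutions of a subgroup isomorphic to $\mathrm{Sym}(3)$. Distinct points on a common line are collinear ($p\sim q$), and $p\wedge q$ is the third point. A subspace is a nonempty subset closed under $\wedge$. The subspace generated by two distinct intersecting lines is either a complete quadrilateral (6 points, 4 lines, any two lines meeting in one point, each point on two lines) or an affine plane of order $3$; $\mathcal{G}$ is of symplectic type if it is always a complete quadrilateral. The nilpotent Matsuo algebra $A=M_R(\mathcal{G},1)$ is the free $R$-module with basis $\mathcal{P}$ and commutative bilinear product $p\cdot q=0$ if $p=q$ or $p\not\sim q$, $p\cdot q=p+q+p\wedge q$ if $p\sim q$. A line $\ell$ is identified with the sum of its points in $A$, and a complete quadrilateral $\pi\subseteq\mathcal{P}$ (a subspace isomorphic to the complete quadrilateral) with the sum of its $6$ points; $\operatorname{ad}_\ell(v)=\ell v$. Angle brackets denote $R$-linear span. *)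

theory Defs
  imports "HOL-Algebra.Sym_Groups" "HOL-Algebra.Multiplicative_Group" "HOL-Algebra.Generated_Groups"
begin

definition three_transposition_group :: "('g, 'b) monoid_scheme \<Rightarrow> 'g set \<Rightarrow> bool" where
  "three_transposition_group G D \<longleftrightarrow>
     group G \<and> D \<subseteq> carrier G \<and>
     (\<exists>d\<in>carrier G. D = {g \<otimes>\<^bsub>G\<^esub> d \<otimes>\<^bsub>G\<^esub> inv\<^bsub>G\<^esub> g | g. g \<in> carrier G}) \<and>
     (\<forall>d\<in>D. d \<noteq> \<one>\<^bsub>G\<^esub> \<and> d \<otimes>\<^bsub>G\<^esub> d = \<one>\<^bsub>G\<^esub>) \<and>
     generate G D = carrier G \<and>
     (\<forall>d\<in>D. \<forall>e\<in>D. group.ord G (d \<otimes>\<^bsub>G\<^esub> e) \<noteq> 0 \<and> group.ord G (d \<otimes>\<^bsub>G\<^esub> e) \<le> 3)"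

definition fischer_lines :: "('g, 'b) monoid_scheme \<Rightarrow> 'g set \<Rightarrow> 'g set set" where
  "fischer_lines G D = {l. l \<subseteq> D \<and> card l = 3 \<and>
     (\<exists>H. subgroup H G \<and> (G\<lparr>carrier := H\<rparr>) \<cong> sym_group 3 \<and>
          l = {h \<in> H. h \<noteq> \<one>\<^bsub>G\<^esub> \<and> h \<otimes>\<^bsub>G\<^esub> h = \<one>\<^bsub>G\<^esub>})}"

definition fcollinear :: "('g, 'b) monoid_scheme \<Rightarrow> 'g set \<Rightarrow> 'g \<Rightarrow> 'g \<Rightarrow> bool" where
  "fcollinear G D p q \<longleftrightarrow> p \<noteq> q \<and> (\<exists>l\<in>fischer_lines G D. p \<in> l \<and> q \<in> l)"

definition fwedge :: "('g, 'b) monoid_scheme \<Rightarrow> 'g set \<Rightarrow> 'g \<Rightarrow> 'g \<Rightarrow> 'g" where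
  "fwedge G D p q = (THE r. \<exists>l\<in>fischer_lines G D. l = {p, q, r} \<and> r \<noteq> p \<and> r \<noteq> q)"

definition fsubspace :: "('g, 'b) monoid_scheme \<Rightarrow> 'g set \<Rightarrow> 'g set \<Rightarrow> bool" where
  "fsubspace G D S \<longleftrightarrow> S \<noteq> {} \<and> S \<subseteq> D \<and>
     (\<forall>p\<in>S. \<forall>q\<in>S. fcollinear G D p q \<longrightarrow> fwedge G D p q \<in> S)"

definition fgenerated :: "('g, 'b) monoid_scheme \<Rightarrow> 'g set \<Rightarrow> 'g set \<Rightarrow> 'g set" where
  "fgenerated G D X = \<Inter>{S. fsubspace G D S \<and> X \<subseteq> S}"

definition complete_quadrilateral :: "('g, 'b) monoid_scheme \<Rightarrow> 'g set \<Rightarrow> 'g set \<Rightarrow> bool" where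
  "complete_quadrilateral G D S \<longleftrightarrow> fsubspace G D S \<and> finite S \<and> card S = 6 \<and>
     (let L = {l \<in> fischer_lines G D. l \<subseteq> S} in
        card L = 4 \<and>
        (\<forall>l1\<in>L. \<forall>l2\<in>L. l1 \<noteq> l2 \<longrightarrow> card (l1 \<inter> l2) = 1) \<and>
        (\<forall>p\<in>S. card {l \<in> L. p \<in> l} = 2))"

definition symplectic_type :: "('g, 'b) monoid_scheme \<Rightarrow> 'g set \<Rightarrow> bool" where
  "symplectic_type G D \<longleftrightarrow>
     (\<forall>l1\<in>fischer_lines G D. \<forall>l2\<in>fischer_lines G D. l1 \<noteq> l2 \<and> l1 \<inter> l2 \<noteq> {} \<longrightarrow>
        complete_quadrilateral G D (fgenerated G D (l1 \<union> l2)))"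

section \<open>The nilpotent Matsuo algebra M_R(G,1), elements as finitely supported functions D \<Rightarrow> R\<close>

definition supp :: "('g \<Rightarrow> 'r::zero) \<Rightarrow> 'g set" where
  "supp v = {p. v p \<noteq> 0}"

definition matsuo_carrier :: "'g set \<Rightarrow> ('g \<Rightarrow> 'r::zero) set" where
  "matsuo_carrier D = {v. finite (supp v) \<and> supp v \<subseteq> D}"

definition pt :: "'g \<Rightarrow> 'g \<Rightarrow> 'r::{zero,one}" where
  "pt p = (\<lambda>x. if x = p then 1 else 0)"

definition setvec :: "'g set \<Rightarrow> 'g \<Rightarrow> 'r::comm_ring_1" where
  "setvec S = (\<lambda>x. \<Sum>p\<in>S. pt p x)"

definition basis_prod :: "('g, 'b) monoid_scheme \<Rightarrow> 'g set \<Rightarrow> 'g \<Rightarrow> 'g \<Rightarrow> 'g \<Rightarrow> 'r::comm_ring_1" where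
  "basis_prod G D p q = (if fcollinear G D p q
      then (\<lambda>x. pt p x + pt q x + pt (fwedge G D p q) x) else (\<lambda>x. 0))"

definition mprod :: "('g, 'b) monoid_scheme \<Rightarrow> 'g set \<Rightarrow> ('g \<Rightarrow> 'r::comm_ring_1) \<Rightarrow> ('g \<Rightarrow> 'r) \<Rightarrow> 'g \<Rightarrow> 'r" where
  "mprod G D u v = (\<lambda>x. \<Sum>p\<in>supp u. \<Sum>q\<in>supp v. u p * v q * basis_prod G D p q x)"

definition rspan :: "('g \<Rightarrow> 'r::comm_ring_1) set \<Rightarrow> ('g \<Rightarrow> 'r) set" where
  "rspan S = {(\<lambda>x. \<Sum>s\<in>F. c s * s x) | F c. finite F \<and> F \<subseteq> S}"

definition vsum :: "('g \<Rightarrow> 'r::comm_ring_1) list \<Rightarrow> 'g \<Rightarrow> 'r" where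
  "vsum us = (\<lambda>x. sum_list (map (\<lambda>u. u x) us))"

definition is_direct_sum :: "('g \<Rightarrow> 'r::comm_ring_1) set list \<Rightarrow> ('g \<Rightarrow> 'r) set \<Rightarrow> bool" where
  "is_direct_sum Us W \<longleftrightarrow>
     W = {vsum us | us. length us = length Us \<and> (\<forall>i<length Us. us ! i \<in> Us ! i)} \<and>
     (\<forall>us. length us = length Us \<and> (\<forall>i<length Us. us ! i \<in> Us ! i) \<and> vsum us = (\<lambda>x. 0)
        \<longrightarrow> (\<forall>i<length Us. us ! i = (\<lambda>x. 0)))"

end

theory Submission
  imports Defs
begin

text \<open>
  Write \<open>ad\<close> for multiplication by \<open>\<ell> = a + b + c\<close>. If a point \<open>z \<notin> \<ell>\<close> is collinear with
  \<open>p\<^sub>1 \<in> \<ell>\<close>, the symplectic condition forces it to be collinear with exactly one further point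
  \<open>p\<^sub>2\<close> of \<open>\<ell>\<close>, and then \<open>\<ell>\<close>, \<open>z\<close>, \<open>x = p\<^sub>1 \<and> z\<close>, \<open>y = p\<^sub>2 \<and> z\<close> form a complete quadrilateral
  with lines \<open>\<ell>\<close>, \<open>p\<^sub>1 z x\<close>, \<open>p\<^sub>2 z y\<close>, \<open>p\<^sub>3 x y\<close>. Since \<open>2 = 0\<close>, \<open>ad\<close> kills the points of \<open>\<ell>\<close> and of
  \<open>P\<^sub>0\<close> and sends \<open>z\<close> to \<open>p\<^sub>1 + p\<^sub>2 + x + y\<close>; from this \<open>ad \<circ> ad = ad\<close>, so \<open>A\<close> splits into the
  kernel and the fixed points of \<open>ad\<close>, the latter spanned by the \<open>ad z\<close>. Evaluating at \<open>z\<close> gives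
  \<open>(ad v) z = v x + v y\<close>, so \<open>v\<close> lies in the kernel iff it is constant on the three points off
  \<open>\<ell>\<close> of every quadrilateral through \<open>\<ell>\<close>, which yields the decomposition of the kernel.
\<close>

lemma char2_cancel:
  assumes "(2::'a::comm_ring_1) = 0"
  shows "a + a = (0::'a)" "a + (a + b) = (b::'a)"
proof -
  have "a + a = 2 * a" by simp
  then show aa: "a + a = 0" using assms by simp
  have "a + (a + b) = (a + a) + b" by (simp add: add.assoc)
  then show "a + (a + b) = b" using aa by simp
qed

lemma char2_add_eq_0_iff:
  assumes "(2::'a::comm_ring_1) = 0"
  shows "a + b = 0 \<longleftrightarrow> a = (b::'a)"
proof -
  have "a + b = 0 \<longleftrightarrow> a + b = b + b" using char2_cancel(1)[OF assms, of b] by simp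
  also have "\<dots> \<longleftrightarrow> a = b" by simp
  finally show ?thesis .
qed

section \<open>Finitely supported functions and the Matsuo product\<close>

lemma pt_commute: "(pt p q :: 'r::{zero,one}) = pt q p"
  by (auto simp: pt_def)

lemma supp_pt [simp]: "supp (pt q :: 'g \<Rightarrow> 'r::zero_neq_one) = {q}"
  by (auto simp: supp_def pt_def)

lemma setvec_apply: "finite S \<Longrightarrow> (setvec S x :: 'r::comm_ring_1) = (if x \<in> S then 1 else 0)"
  by (simp add: setvec_def pt_def sum.delta)

lemma supp_setvec: "finite S \<Longrightarrow> supp (setvec S :: 'g \<Rightarrow> 'r::comm_ring_1) = S"
  by (auto simp: supp_def setvec_apply)

lemma sum_mult_pt: "finite T \<Longrightarrow> (\<Sum>q\<in>T. f q * (pt q t :: 'r::comm_ring_1)) = (if t \<in> T then f t else 0)"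
  by (simp add: pt_def if_distrib[of "(*) _"] sum.delta cong: if_cong)

lemma supp_lincomb:
  fixes f :: "'i \<Rightarrow> 'g \<Rightarrow> 'r::comm_ring_1"
  shows "supp (\<lambda>t. \<Sum>i\<in>I. c i * f i t) \<subseteq> (\<Union>i\<in>I. supp (f i))"
proof
  fix t assume "t \<in> supp (\<lambda>t. \<Sum>i\<in>I. c i * f i t)"
  then have "(\<Sum>i\<in>I. c i * f i t) \<noteq> 0" by (simp add: supp_def)
  then obtain i where i: "i \<in> I" and "c i * f i t \<noteq> 0"
    using sum.neutral[of I "\<lambda>i. c i * f i t"] by blast
  then have "f i t \<noteq> 0" by auto
  with i show "t \<in> (\<Union>i\<in>I. supp (f i))" unfolding supp_def by blast
qed

lemma matsuo_carrier_lincomb: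
  fixes f :: "'i \<Rightarrow> 'g \<Rightarrow> 'r::comm_ring_1"
  assumes "finite I" "\<And>i. i \<in> I \<Longrightarrow> f i \<in> matsuo_carrier D"
  shows "(\<lambda>t. \<Sum>i\<in>I. c i * f i t) \<in> matsuo_carrier D"
proof -
  have "finite (\<Union>i\<in>I. supp (f i))" "(\<Union>i\<in>I. supp (f i)) \<subseteq> D"
    using assms by (auto simp: matsuo_carrier_def)
  then show ?thesis
    using finite_subset[OF supp_lincomb] order.trans[OF supp_lincomb[of c f I]]
    by (simp add: matsuo_carrier_def)
qed

lemma matsuo_carrier_add:
  fixes u w :: "'g \<Rightarrow> 'r::comm_ring_1"
  assumes "u \<in> matsuo_carrier D" "w \<in> matsuo_carrier D"
  shows "(\<lambda>t. u t + w t) \<in> matsuo_carrier D"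
proof -
  have s: "supp (\<lambda>t. u t + w t) \<subseteq> supp u \<union> supp w" by (auto simp: supp_def)
  show ?thesis
    using assms finite_subset[OF s] order.trans[OF s] by (simp add: matsuo_carrier_def)
qed

lemma matsuo_carrier_diff:
  fixes u w :: "'g \<Rightarrow> 'r::comm_ring_1"
  assumes "u \<in> matsuo_carrier D" "w \<in> matsuo_carrier D"
  shows "(\<lambda>t. u t - w t) \<in> matsuo_carrier D"
proof -
  have s: "supp (\<lambda>t. u t - w t) \<subseteq> supp u \<union> supp w" by (auto simp: supp_def)
  show ?thesis
    using assms finite_subset[OF s] order.trans[OF s] by (simp add: matsuo_carrier_def)
qed

lemma pt_in_matsuo_carrier: "p \<in> D \<Longrightarrow> (pt p :: 'g \<Rightarrow> 'r::zero_neq_one) \<in> matsuo_carrier D"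
  by (simp add: matsuo_carrier_def)

lemma setvec_in_matsuo_carrier:
  "finite S \<Longrightarrow> S \<subseteq> D \<Longrightarrow> (setvec S :: 'g \<Rightarrow> 'r::comm_ring_1) \<in> matsuo_carrier D"
  by (simp add: matsuo_carrier_def supp_setvec)

lemma lincomb_in_rspan:
  fixes g :: "'i \<Rightarrow> 'g \<Rightarrow> 'r::comm_ring_1"
  assumes "finite X" "\<And>q. q \<in> X \<Longrightarrow> g q \<in> S"
  shows "(\<lambda>t. \<Sum>q\<in>X. f q * g q t) \<in> rspan S"
proof -
  define c where "c s = (\<Sum>q\<in>{q\<in>X. g q = s}. f q)" for s
  have "(\<Sum>q\<in>X. f q * g q t) = (\<Sum>s\<in>g ` X. c s * s t)" for t
    unfolding c_def sum_distrib_right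
    by (rule sum.image_gen[OF assms(1), THEN trans]) (auto intro!: sum.cong)
  moreover have "finite (g ` X)" "g ` X \<subseteq> S" using assms by auto
  ultimately show ?thesis unfolding rspan_def by blast
qed

lemma rspan_subset_matsuo_carrier: "S \<subseteq> matsuo_carrier D \<Longrightarrow> rspan S \<subseteq> matsuo_carrier D"
  unfolding rspan_def by (clarify, rule matsuo_carrier_lincomb) auto

lemma rspan_apply_eq_0:
  assumes "u \<in> rspan S" "\<And>s. s \<in> S \<Longrightarrow> s t = 0"
  shows "u t = 0"
proof -
  obtain F c where "F \<subseteq> S" "u = (\<lambda>x. \<Sum>s\<in>F. c s * s x)"
    using assms(1) unfolding rspan_def by blast
  moreover from this(1) have "\<forall>s\<in>F. s t = 0" using assms(2) by blast
  ultimately show ?thesis by (auto intro!: sum.neutral)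
qed

lemma is_direct_sum_iff_list_all2:
  "is_direct_sum Us W \<longleftrightarrow>
     W = {vsum us | us. list_all2 (\<in>) us Us} \<and>
     (\<forall>us. list_all2 (\<in>) us Us \<and> vsum us = (\<lambda>x. 0) \<longrightarrow> list_all (\<lambda>u. u = (\<lambda>x. 0)) us)"
  unfolding is_direct_sum_def list_all2_conv_all_nth list_all_length by auto

lemma vsum2: "vsum [u, w] = (\<lambda>t. u t + w t)"
  by (simp add: vsum_def)

lemma vsum3: "vsum [u, v, w] = (\<lambda>t. u t + (v t + w t))"
  by (simp add: vsum_def)

lemma list_all2_2: "list_all2 P us [X, Y] \<longleftrightarrow> (\<exists>u w. us = [u, w] \<and> P u X \<and> P w Y)"
  by (auto simp: list_all2_Cons2)

lemma list_all2_3: "list_all2 P us [X, Y, Z] \<longleftrightarrow> (\<exists>u v w. us = [u, v, w] \<and> P u X \<and> P v Y \<and> P w Z)"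
  by (auto simp: list_all2_Cons2)

lemma is_direct_sum_2I:
  assumes "W = {(\<lambda>t. u t + w t) | u w. u \<in> X \<and> w \<in> Y}"
    and "\<And>u w. u \<in> X \<Longrightarrow> w \<in> Y \<Longrightarrow> (\<lambda>t. u t + w t) = (\<lambda>t. 0) \<Longrightarrow> u = (\<lambda>t. 0) \<and> w = (\<lambda>t. 0)"
  shows "is_direct_sum [X, Y] W"
proof -
  have "{vsum us |us. list_all2 (\<in>) us [X, Y]} = {vsum [u, w] | u w. u \<in> X \<and> w \<in> Y}"
    unfolding list_all2_2 by blast
  with assms show ?thesis
    unfolding is_direct_sum_iff_list_all2 by (auto simp: vsum2 list_all2_2)
qed

lemma is_direct_sum_3I:
  assumes "W = {(\<lambda>t. u t + (v t + w t)) | u v w. u \<in> X \<and> v \<in> Y \<and> w \<in> Z}"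
    and "\<And>u v w. u \<in> X \<Longrightarrow> v \<in> Y \<Longrightarrow> w \<in> Z \<Longrightarrow> (\<lambda>t. u t + (v t + w t)) = (\<lambda>t. 0) \<Longrightarrow>
           u = (\<lambda>t. 0) \<and> v = (\<lambda>t. 0) \<and> w = (\<lambda>t. 0)"
  shows "is_direct_sum [X, Y, Z] W"
proof -
  have "{vsum us |us. list_all2 (\<in>) us [X, Y, Z]} = {vsum [u, v, w] | u v w. u \<in> X \<and> v \<in> Y \<and> w \<in> Z}"
    unfolding list_all2_3 by blast
  with assms show ?thesis
    unfolding is_direct_sum_iff_list_all2 by (auto simp: vsum3 list_all2_3)
qed

lemma is_direct_sum_kernel_fixed_points:
  fixes f :: "('g \<Rightarrow> 'r::comm_ring_1) \<Rightarrow> 'g \<Rightarrow> 'r"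
  assumes add_closed: "\<And>u w. u \<in> A \<Longrightarrow> w \<in> A \<Longrightarrow> (\<lambda>t. u t + w t) \<in> A"
    and diff_closed: "\<And>u w. u \<in> A \<Longrightarrow> w \<in> A \<Longrightarrow> (\<lambda>t. u t - w t) \<in> A"
    and maps_to: "\<And>v. v \<in> A \<Longrightarrow> f v \<in> A"
    and additive: "\<And>u w. u \<in> A \<Longrightarrow> w \<in> A \<Longrightarrow> f (\<lambda>t. u t + w t) = (\<lambda>t. f u t + f w t)"
    and idem: "\<And>v. v \<in> A \<Longrightarrow> f (f v) = f v"
  shows "is_direct_sum [{v \<in> A. f v = (\<lambda>t. 0)}, {v \<in> A. f v = v}] A"
proof (rule is_direct_sum_2I)
  show "A = {(\<lambda>t. u t + w t) |u w. u \<in> {v \<in> A. f v = (\<lambda>t. 0)} \<and> w \<in> {v \<in> A. f v = v}}"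
  proof (rule equalityI, rule subsetI)
    fix v assume v: "v \<in> A"
    let ?u = "\<lambda>t. v t - f v t"
    have u: "?u \<in> A" by (rule diff_closed[OF v maps_to[OF v]])
    have "f v = f (\<lambda>t. ?u t + f v t)" by simp
    also have "\<dots> = (\<lambda>t. f ?u t + f (f v) t)" by (rule additive[OF u maps_to[OF v]])
    finally have eq: "f v = (\<lambda>t. f ?u t + f v t)" by (simp only: idem[OF v])
    have "f ?u t = 0" for t using fun_cong[OF eq, of t] by simp
    then have "f ?u = (\<lambda>t. 0)" by blast
    then show "v \<in> {(\<lambda>t. u t + w t) |u w. u \<in> {v \<in> A. f v = (\<lambda>t. 0)} \<and> w \<in> {v \<in> A. f v = v}}"
      using u maps_to[OF v] idem[OF v] by (intro CollectI exI[of _ ?u] exI[of _ "f v"]) auto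
  qed (auto intro: add_closed)
next
  fix u w assume u: "u \<in> {v \<in> A. f v = (\<lambda>t. 0)}" and w: "w \<in> {v \<in> A. f v = v}"
    and sum0: "(\<lambda>t. u t + w t) = (\<lambda>t. 0)"
  have zero: "(\<lambda>t. 0) \<in> A" using add_closed[of u w] u w sum0 by simp
  have "f (\<lambda>t. 0) = f (\<lambda>t. 0 + 0)" by simp
  also have "\<dots> = (\<lambda>t. f (\<lambda>t. 0) t + f (\<lambda>t. 0) t)" by (rule additive[OF zero zero])
  finally have eq: "f (\<lambda>t. 0) = (\<lambda>t. f (\<lambda>t. 0) t + f (\<lambda>t. 0) t)" .
  have "f (\<lambda>t. 0) t = 0" for t using fun_cong[OF eq, of t] by simp
  moreover have "f (\<lambda>t. u t + w t) = w" using additive[of u w] u w by simp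
  ultimately have "w t = 0" for t using sum0 by simp
  then show "u = (\<lambda>t. 0) \<and> w = (\<lambda>t. 0)" using sum0 by (simp add: fun_eq_iff)
qed

lemma mprod_expand_right:
  fixes u v :: "'g \<Rightarrow> 'r::comm_ring_1"
  assumes "finite T" "supp v \<subseteq> T"
  shows "mprod G D u v x = (\<Sum>q\<in>T. v q * mprod G D u (pt q) x)"
proof -
  have pt: "mprod G D u (pt q) x = (\<Sum>p\<in>supp u. u p * basis_prod G D p q x)" for q
    by (simp add: mprod_def) (simp add: pt_def)
  have "mprod G D u v x = (\<Sum>p\<in>supp u. \<Sum>q\<in>T. u p * v q * basis_prod G D p q x)"
    unfolding mprod_def using assms by (intro sum.cong refl sum.mono_neutral_left) (auto simp: supp_def)
  also have "\<dots> = (\<Sum>q\<in>T. v q * mprod G D u (pt q) x)"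
    by (simp add: pt sum_distrib_left sum.swap[of _ "supp u"] mult.assoc mult.left_commute)
  finally show ?thesis .
qed

lemma mprod_lincomb_right:
  fixes f :: "'i \<Rightarrow> 'g \<Rightarrow> 'r::comm_ring_1"
  assumes "finite I" "\<And>i. i \<in> I \<Longrightarrow> finite (supp (f i))"
  shows "mprod G D u (\<lambda>t. \<Sum>i\<in>I. c i * f i t) = (\<lambda>x. \<Sum>i\<in>I. c i * mprod G D u (f i) x)"
proof
  fix x
  let ?T = "\<Union>i\<in>I. supp (f i)"
  have T: "finite ?T" using assms by simp
  have "mprod G D u (\<lambda>t. \<Sum>i\<in>I. c i * f i t) x
      = (\<Sum>q\<in>?T. (\<Sum>i\<in>I. c i * f i q) * mprod G D u (pt q) x)"
    by (rule mprod_expand_right[OF T supp_lincomb])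
  also have "\<dots> = (\<Sum>i\<in>I. c i * (\<Sum>q\<in>?T. f i q * mprod G D u (pt q) x))"
    by (simp add: sum_distrib_left sum_distrib_right sum.swap[of _ ?T] mult.assoc)
  also have "\<dots> = (\<Sum>i\<in>I. c i * mprod G D u (f i) x)"
    using T by (intro sum.cong refl arg_cong[where f="(*) _"] mprod_expand_right[symmetric]) auto
  finally show "mprod G D u (\<lambda>t. \<Sum>i\<in>I. c i * f i t) x = (\<Sum>i\<in>I. c i * mprod G D u (f i) x)" .
qed

lemma mprod_add_right:
  fixes v w :: "'g \<Rightarrow> 'r::comm_ring_1"
  assumes "finite (supp v)" "finite (supp w)"
  shows "mprod G D u (\<lambda>t. v t + w t) = (\<lambda>x. mprod G D u v x + mprod G D u w x)"
proof
  fix x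
  let ?T = "supp v \<union> supp w"
  have T: "finite ?T" using assms by simp
  have "supp (\<lambda>t. v t + w t) \<subseteq> ?T" by (auto simp: supp_def)
  then show "mprod G D u (\<lambda>t. v t + w t) x = mprod G D u v x + mprod G D u w x"
    by (simp add: mprod_expand_right[OF T] distrib_right sum.distrib)
qed

lemma mprod_setvec_pt:
  "finite l \<Longrightarrow> mprod G D (setvec l) (pt q) x = (\<Sum>p\<in>l. (basis_prod G D p q x :: 'r::comm_ring_1))"
  by (simp add: mprod_def supp_setvec setvec_apply) (simp add: pt_def)

lemma mprod_zero_right: "mprod G D u (\<lambda>t. 0 :: 'r::comm_ring_1) = (\<lambda>x. 0)"
  by (simp add: mprod_def supp_def)

lemma mprod_rspan_eigen:
  fixes w :: "'g \<Rightarrow> 'r::comm_ring_1"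
  assumes "u \<in> rspan S" "\<And>s. s \<in> S \<Longrightarrow> finite (supp s)"
    and "\<And>s. s \<in> S \<Longrightarrow> mprod G D w s = (\<lambda>x. k * s x)"
  shows "mprod G D w u = (\<lambda>x. k * u x)"
proof -
  obtain F c where F: "finite F" "F \<subseteq> S" and u: "u = (\<lambda>x. \<Sum>s\<in>F. c s * s x)"
    using assms(1) unfolding rspan_def by blast
  have "mprod G D w u = (\<lambda>x. \<Sum>s\<in>F. c s * mprod G D w s x)"
    unfolding u using F assms(2) by (intro mprod_lincomb_right) auto
  also have "\<dots> = (\<lambda>x. \<Sum>s\<in>F. c s * (k * s x))"
  proof (intro ext sum.cong refl)
    fix x s assume "s \<in> F"
    then have "mprod G D w s = (\<lambda>x. k * s x)" using F(2) assms(3) by blast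
    then show "c s * mprod G D w s x = c s * (k * s x)" by simp
  qed
  also have "\<dots> = (\<lambda>x. k * u x)" unfolding u by (simp add: sum_distrib_left ac_simps)
  finally show ?thesis .
qed

section \<open>Fischer spaces of symplectic type\<close>

lemma subset_fgenerated: "X \<subseteq> fgenerated G D X"
  unfolding fgenerated_def by blast

lemma fischer_linesD: "l \<in> fischer_lines G D \<Longrightarrow> l \<subseteq> D \<and> card l = 3"
  by (simp add: fischer_lines_def)

lemma fcollinear_commute: "fcollinear G D p q \<longleftrightarrow> fcollinear G D q p"
  unfolding fcollinear_def by blast

lemma fcollinear_in_D: "fcollinear G D p q \<Longrightarrow> p \<in> D \<and> q \<in> D"
  unfolding fcollinear_def using fischer_linesD by blast

lemma fcollinear_irrefl: "\<not> fcollinear G D p p"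
  by (simp add: fcollinear_def)

lemma complete_quadrilateralD:
  assumes "complete_quadrilateral G D S"
  shows "fsubspace G D S" "finite S" "card S = 6"
    and "\<And>l1 l2. l1 \<in> fischer_lines G D \<Longrightarrow> l1 \<subseteq> S \<Longrightarrow> l2 \<in> fischer_lines G D \<Longrightarrow> l2 \<subseteq> S \<Longrightarrow>
           l1 \<noteq> l2 \<Longrightarrow> card (l1 \<inter> l2) = 1"
    and "\<And>p. p \<in> S \<Longrightarrow> card {l \<in> fischer_lines G D. l \<subseteq> S \<and> p \<in> l} = 2"
  using assms unfolding complete_quadrilateral_def Let_def by auto

lemma fsubspace_wedge:
  "fsubspace G D S \<Longrightarrow> p \<in> S \<Longrightarrow> q \<in> S \<Longrightarrow> fcollinear G D p q \<Longrightarrow> fwedge G D p q \<in> S"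
  unfolding fsubspace_def by blast

lemma card_3E:
  assumes "card l = 3" "p \<in> l"
  obtains q r where "l = {p, q, r}" "p \<noteq> q" "q \<noteq> r" "p \<noteq> r"
proof -
  obtain x y z where l: "l = {x, y, z}" "x \<noteq> y" "y \<noteq> z" "x \<noteq> z"
    using assms(1) unfolding card_3_iff by blast
  then consider "p = x" | "p = y" | "p = z" using assms(2) by auto
  then show ?thesis
  proof cases
    case 1 then show ?thesis using l that[of y z] by simp
  next
    case 2 then show ?thesis using l that[of x z] by (simp add: insert_commute)
  next
    case 3 then show ?thesis using l that[of x y] by (simp add: insert_commute)
  qed
qed

locale symplectic_fischer_space =
  fixes G :: "('g, 'b) monoid_scheme" and D :: "'g set"
  assumes symplectic: "symplectic_type G D"
begin

abbreviation col :: "'g \<Rightarrow> 'g \<Rightarrow> bool" where "col \<equiv> fcollinear G D"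
abbreviation wedge :: "'g \<Rightarrow> 'g \<Rightarrow> 'g" where "wedge \<equiv> fwedge G D"

lemma complete_quadrilateral_generated:
  assumes "l1 \<in> fischer_lines G D" "l2 \<in> fischer_lines G D" "l1 \<noteq> l2" "p \<in> l1" "p \<in> l2"
  shows "complete_quadrilateral G D (fgenerated G D (l1 \<union> l2))"
  using symplectic assms unfolding symplectic_type_def by blast

lemma line_eqI:
  assumes "l1 \<in> fischer_lines G D" "l2 \<in> fischer_lines G D"
    and "p \<in> l1" "q \<in> l1" "p \<in> l2" "q \<in> l2" "p \<noteq> q"
  shows "l1 = l2"
proof (rule ccontr)
  assume ne: "l1 \<noteq> l2"
  have "l1 \<union> l2 \<subseteq> fgenerated G D (l1 \<union> l2)" by (rule subset_fgenerated)
  then have "card (l1 \<inter> l2) = 1"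
    using complete_quadrilateralD(4)[OF complete_quadrilateral_generated[OF assms(1,2) ne assms(3,5)]]
      assms(1,2) ne by simp
  moreover have "finite (l1 \<inter> l2)"
    using fischer_linesD[OF assms(1)] by (simp add: card_ge_0_finite)
  moreover have "{p, q} \<subseteq> l1 \<inter> l2" using assms by blast
  ultimately show False using card_mono[of "l1 \<inter> l2" "{p, q}"] assms(7) by simp
qed

definition is_line :: "'g \<Rightarrow> 'g \<Rightarrow> 'g \<Rightarrow> bool" where
  "is_line p q r \<longleftrightarrow> {p, q, r} \<in> fischer_lines G D \<and> p \<noteq> q \<and> q \<noteq> r \<and> p \<noteq> r"

lemma is_line_swap:
  "is_line p q r \<Longrightarrow> is_line q p r"
  "is_line p q r \<Longrightarrow> is_line p r q"
  by (auto simp: is_line_def insert_commute)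

lemma is_line_col: "is_line p q r \<Longrightarrow> col p q"
  unfolding is_line_def fcollinear_def by blast

lemma is_line_in_D: "is_line p q r \<Longrightarrow> p \<in> D \<and> q \<in> D \<and> r \<in> D"
  unfolding is_line_def using fischer_linesD by blast

lemma is_line_eq:
  assumes "is_line p q r" "is_line p' q' r'"
    and "s \<in> {p, q, r}" "t \<in> {p, q, r}" "s \<in> {p', q', r'}" "t \<in> {p', q', r'}" "s \<noteq> t"
  shows "{p, q, r} = {p', q', r'}"
  using line_eqI[of "{p, q, r}" "{p', q', r'}" s t] assms unfolding is_line_def by blast

lemma is_line_wedge: "is_line p q r \<Longrightarrow> wedge p q = r"
  unfolding fwedge_def
proof (rule the_equality)
  assume "is_line p q r"
  then show "\<exists>l\<in>fischer_lines G D. l = {p, q, r} \<and> r \<noteq> p \<and> r \<noteq> q"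
    unfolding is_line_def by blast
  fix r' assume "\<exists>l\<in>fischer_lines G D. l = {p, q, r'} \<and> r' \<noteq> p \<and> r' \<noteq> q"
  then have "is_line p q r'" using \<open>is_line p q r\<close> unfolding is_line_def by blast
  then have "{p, q, r'} = {p, q, r}" using \<open>is_line p q r\<close> is_line_eq[of p q r' p q r p q]
    unfolding is_line_def by blast
  then have "r' \<in> {p, q, r}" by blast
  then show "r' = r" using \<open>is_line p q r'\<close> unfolding is_line_def by auto
qed

lemma is_line_wedgeI:
  assumes "col p q"
  shows "is_line p q (wedge p q)"
proof -
  obtain l where l: "l \<in> fischer_lines G D" "p \<in> l" "q \<in> l" "p \<noteq> q"
    using assms unfolding fcollinear_def by blast
  obtain q' r where "l = {p, q', r}" "p \<noteq> q'" "q' \<noteq> r" "p \<noteq> r"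
    using card_3E fischer_linesD[OF l(1)] l(2) by metis
  then obtain r where "l = {p, q, r}" "q \<noteq> r" "p \<noteq> r"
    using l(3,4) by (auto simp: insert_commute)
  then have "is_line p q r" using l unfolding is_line_def by blast
  then show ?thesis using is_line_wedge by simp
qed

lemma generated_cq_through_point:
  assumes L: "is_line p1 p2 p3" and z: "z \<notin> {p1, p2, p3}" "col z p1"
  obtains S where "complete_quadrilateral G D S" "{p1, p2, p3} \<subseteq> S" "{p1, z, wedge p1 z} \<subseteq> S"
    and "{p1, z, wedge p1 z} \<in> fischer_lines G D"
proof -
  have m: "is_line p1 z (wedge p1 z)" using z(2) by (simp add: fcollinear_commute is_line_wedgeI)
  have lines: "{p1, p2, p3} \<in> fischer_lines G D" "{p1, z, wedge p1 z} \<in> fischer_lines G D"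
    using L m unfolding is_line_def by auto
  have "z \<in> {p1, z, wedge p1 z}" by simp
  then have "{p1, p2, p3} \<noteq> {p1, z, wedge p1 z}" using z(1) by blast
  then have "complete_quadrilateral G D (fgenerated G D ({p1, p2, p3} \<union> {p1, z, wedge p1 z}))"
    by (rule complete_quadrilateral_generated[OF lines, where p = p1]) auto
  moreover have "{p1, p2, p3} \<union> {p1, z, wedge p1 z} \<subseteq> fgenerated G D ({p1, p2, p3} \<union> {p1, z, wedge p1 z})"
    by (rule subset_fgenerated)
  ultimately show ?thesis using that lines(2) by simp
qed

lemma col_not_all_three:
  assumes L: "is_line p1 p2 p3" and z: "z \<notin> {p1, p2, p3}" and c: "col z p1" "col z p2" "col z p3"
  shows False
proof -
  obtain S where cq: "complete_quadrilateral G D S" and sub: "{p1, p2, p3} \<subseteq> S"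
    and m: "{p1, z, wedge p1 z} \<subseteq> S" "{p1, z, wedge p1 z} \<in> fischer_lines G D"
    using generated_cq_through_point[OF L z c(1)] .
  define Z where "Z = {n \<in> fischer_lines G D. n \<subseteq> S \<and> z \<in> n}"
  have card_Z: "card Z = 2" unfolding Z_def using m by (intro complete_quadrilateralD(5)[OF cq]) simp
  have in_Z: "{z, p, wedge z p} \<in> Z" if "p \<in> {p1, p2, p3}" "col z p" for p
  proof -
    have "is_line z p (wedge z p)" using that(2) by (rule is_line_wedgeI)
    moreover have "wedge z p \<in> S"
      using complete_quadrilateralD(1)[OF cq] sub m that by (auto intro: fsubspace_wedge)
    ultimately show ?thesis using sub m that(1) unfolding Z_def is_line_def by blast
  qed
  have ne: "n \<noteq> n'" if "n \<in> Z" "p \<in> n" "q \<in> n'" "p \<in> {p1, p2, p3}" "q \<in> {p1, p2, p3}" "p \<noteq> q"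
    for n n' p q
  proof
    assume "n = n'"
    then have "n = {p1, p2, p3}"
      using line_eqI[of n "{p1, p2, p3}" p q] that L unfolding Z_def is_line_def by blast
    then show False using that(1) z unfolding Z_def by blast
  qed
  have d: "p1 \<noteq> p2" "p2 \<noteq> p3" "p1 \<noteq> p3" using L unfolding is_line_def by auto
  have Z3: "{{p1, z, wedge p1 z}, {z, p2, wedge z p2}, {z, p3, wedge z p3}} \<subseteq> Z"
    using m in_Z c unfolding Z_def by auto
  have "{p1, z, wedge p1 z} \<noteq> {z, p2, wedge z p2}" by (rule ne[where p = p1 and q = p2]) (use Z3 d in auto)
  moreover have "{p1, z, wedge p1 z} \<noteq> {z, p3, wedge z p3}" by (rule ne[where p = p1 and q = p3]) (use Z3 d in auto)
  moreover have "{z, p2, wedge z p2} \<noteq> {z, p3, wedge z p3}" by (rule ne[where p = p2 and q = p3]) (use Z3 d in auto)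
  ultimately have "card {{p1, z, wedge p1 z}, {z, p2, wedge z p2}, {z, p3, wedge z p3}} = 3" by simp
  moreover have "finite Z" using card_Z by (simp add: card_ge_0_finite)
  ultimately show False using card_mono[OF _ Z3] card_Z by fastforce
qed

lemma col_another:
  assumes L: "is_line p1 p2 p3" and z: "z \<notin> {p1, p2, p3}" and c: "col z p1" "\<not> col z p3"
  shows "col z p2"
proof -
  obtain S where cq: "complete_quadrilateral G D S" and sub: "{p1, p2, p3} \<subseteq> S"
    and m: "{p1, z, wedge p1 z} \<subseteq> S" "{p1, z, wedge p1 z} \<in> fischer_lines G D"
    using generated_cq_through_point[OF L z c(1)] .
  define Z where "Z = {n \<in> fischer_lines G D. n \<subseteq> S \<and> z \<in> n}"
  have "card Z = 2" unfolding Z_def using m by (intro complete_quadrilateralD(5)[OF cq]) simp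
  then have "\<not> Z \<subseteq> {{p1, z, wedge p1 z}}" using card_mono[of "{{p1, z, wedge p1 z}}" Z] by auto
  then obtain n where n: "n \<in> fischer_lines G D" "n \<subseteq> S" "z \<in> n" "n \<noteq> {p1, z, wedge p1 z}"
    unfolding Z_def by blast
  have "n \<noteq> {p1, p2, p3}" using n(3) z by auto
  moreover have "{p1, p2, p3} \<in> fischer_lines G D" using L unfolding is_line_def by simp
  ultimately have "card (n \<inter> {p1, p2, p3}) = 1"
    using complete_quadrilateralD(4)[OF cq n(1,2) _ sub] by simp
  then obtain p where p: "p \<in> n" "p \<in> {p1, p2, p3}" by (auto simp: card_1_singleton_iff)
  have "p \<noteq> p1" using line_eqI[OF n(1) m(2), of p1 z] n(3,4) p(1) z by auto
  moreover have "col z p" using n(1,3) p z unfolding fcollinear_def by blast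
  ultimately show "col z p2" using p(2) c(2) by blast
qed

lemma col_exactly_one:
  assumes "is_line p1 p2 p3" "z \<notin> {p1, p2, p3}" "col z p1"
  shows "col z p2 \<longleftrightarrow> \<not> col z p3"
  using col_not_all_three[OF assms] col_another[OF assms] by blast


definition quad :: "'g \<Rightarrow> 'g \<Rightarrow> 'g \<Rightarrow> 'g \<Rightarrow> 'g \<Rightarrow> 'g \<Rightarrow> bool" where
  "quad p1 p2 p3 z x y \<longleftrightarrow> z \<notin> {p1, p2, p3} \<and>
     is_line p1 p2 p3 \<and> is_line p1 z x \<and> is_line p2 z y \<and> is_line p3 x y"

lemma three_lines_distinct:
  assumes z: "z \<notin> {p1, p2, p3}"
    and L: "is_line p1 p2 p3" and m: "is_line p1 z x" and n: "is_line p2 z y"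
  shows "x \<notin> {p1, p2, p3}" "y \<notin> {p1, p2, p3}" "x \<noteq> y"
proof -
  show x: "x \<notin> {p1, p2, p3}"
  proof
    assume "x \<in> {p1, p2, p3}"
    then have "{p1, z, x} = {p1, p2, p3}"
      using m L by (intro is_line_eq[of p1 z x p1 p2 p3 p1 x]) (auto simp: is_line_def)
    then show False using z by auto
  qed
  show "y \<notin> {p1, p2, p3}"
  proof
    assume "y \<in> {p1, p2, p3}"
    then have "{p2, z, y} = {p1, p2, p3}"
      using n L by (intro is_line_eq[of p2 z y p1 p2 p3 p2 y]) (auto simp: is_line_def)
    then show False using z by auto
  qed
  show "x \<noteq> y"
  proof
    assume "x = y"
    then have eq: "{p2, z, y} = {p1, z, x}"
      using m n by (intro is_line_eq[of p2 z y p1 z x z x]) (auto simp: is_line_def)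
    have "p2 \<in> {p2, z, y}" by simp
    then have "p2 \<in> {p1, z, x}" unfolding eq .
    then have "p2 = x" using z L unfolding is_line_def by auto
    then show False using x by simp
  qed
qed

lemma generated_hexagon:
  assumes z: "z \<notin> {p1, p2, p3}"
    and L: "is_line p1 p2 p3" and m: "is_line p1 z x" and n: "is_line p2 z y"
  shows "fgenerated G D ({p1, p2, p3} \<union> {p1, z, x}) = {p1, p2, p3, z, x, y}"
    and "complete_quadrilateral G D (fgenerated G D ({p1, p2, p3} \<union> {p1, z, x}))"
proof -
  define S where "S = fgenerated G D ({p1, p2, p3} \<union> {p1, z, x})"
  have "z \<in> {p1, z, x}" by simp
  then have "{p1, p2, p3} \<noteq> {p1, z, x}" using z by blast
  then have cq: "complete_quadrilateral G D S"
    unfolding S_def using L m unfolding is_line_def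
    by (intro complete_quadrilateral_generated[where p = p1]) auto
  then show "complete_quadrilateral G D (fgenerated G D ({p1, p2, p3} \<union> {p1, z, x}))"
    unfolding S_def .
  note C = complete_quadrilateralD[OF cq]
  have sub: "{p1, p2, p3} \<union> {p1, z, x} \<subseteq> S" unfolding S_def by (rule subset_fgenerated)
  then have "y \<in> S"
    using is_line_wedge[OF n] is_line_col[OF n] fsubspace_wedge[OF C(1), of p2 z] by auto
  with sub have hex_sub: "{p1, p2, p3, z, x, y} \<subseteq> S" by auto
  have "distinct [p1, p2, p3, z, x, y]"
    using three_lines_distinct[OF assms] z L m n unfolding is_line_def by auto
  then have "card {p1, p2, p3, z, x, y} = card S" using C(3) by (simp add: card_insert_if)
  then show "fgenerated G D ({p1, p2, p3} \<union> {p1, z, x}) = {p1, p2, p3, z, x, y}"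
    using card_subset_eq[OF C(2) hex_sub] unfolding S_def by simp
qed

lemma quad_completion:
  assumes L: "is_line p1 p2 p3" and z: "z \<notin> {p1, p2, p3}" "col z p1" "col z p2"
  shows "quad p1 p2 p3 z (wedge p1 z) (wedge p2 z)"
proof -
  define x where "x = wedge p1 z"
  define y where "y = wedge p2 z"
  have m: "is_line p1 z x" unfolding x_def using z(2) by (simp add: fcollinear_commute is_line_wedgeI)
  have n: "is_line p2 z y" unfolding y_def using z(3) by (simp add: fcollinear_commute is_line_wedgeI)
  note hex = generated_hexagon[OF z(1) L m n]
  have x: "x \<notin> {p1, p2, p3}" using three_lines_distinct[OF z(1) L m n] by simp
  have "\<not> col p2 x"
  proof -
    have "is_line p1 x z" using m by (rule is_line_swap)
    moreover have "p2 \<notin> {p1, x, z}" using x z(1) L unfolding is_line_def by auto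
    moreover have "col p2 p1" using is_line_col[OF is_line_swap(1)[OF L]] .
    ultimately have "col p2 x \<longleftrightarrow> \<not> col p2 z" by (rule col_exactly_one)
    then show ?thesis using z(3) by (simp add: fcollinear_commute)
  qed
  moreover have "col x p1" using is_line_col[OF is_line_swap(1)[OF is_line_swap(2)[OF m]]] .
  ultimately have c3: "col x p3"
    using col_exactly_one[OF L x] by (simp add: fcollinear_commute)
  define u where "u = wedge x p3"
  have xu: "is_line x p3 u" unfolding u_def by (rule is_line_wedgeI[OF c3])
  have "u \<in> {p1, p2, p3, z, x, y}"
    using fsubspace_wedge[OF complete_quadrilateralD(1)[OF hex(2)] _ _ c3] unfolding hex(1) u_def by simp
  moreover have "u \<notin> {p1, p2}"
  proof
    assume "u \<in> {p1, p2}"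
    then have eq: "{x, p3, u} = {p1, p2, p3}"
      using xu L by (intro is_line_eq[of x p3 u p1 p2 p3 p3 u]) (auto simp: is_line_def)
    have "x \<in> {x, p3, u}" by simp
    then show False using x unfolding eq by simp
  qed
  moreover have "u \<noteq> z"
  proof
    assume "u = z"
    then have eq: "{x, p3, u} = {p1, z, x}"
      using xu m by (intro is_line_eq[of x p3 u p1 z x x z]) (auto simp: is_line_def)
    have "p3 \<in> {x, p3, u}" by simp
    then have "p3 \<in> {p1, z, x}" unfolding eq .
    then show False using x z(1) L unfolding is_line_def by auto
  qed
  ultimately have "u = y" using xu unfolding is_line_def by auto
  then have "is_line p3 x y" using is_line_swap(1)[OF xu] by simp
  then show ?thesis using z(1) L m n unfolding quad_def x_def y_def by simp
qed

lemma quad_swap12: "quad p1 p2 p3 z x y \<Longrightarrow> quad p2 p1 p3 z y x"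
  unfolding quad_def using is_line_swap(1)[of p1 p2 p3] is_line_swap(2)[of p3 x y]
  by (simp add: insert_commute)

lemma quad_swap23: "quad p1 p2 p3 z x y \<Longrightarrow> quad p1 p3 p2 x z y"
  unfolding quad_def using three_lines_distinct(1)[of z p1 p2 p3 x y]
    is_line_swap(2)[of p1 p2 p3] is_line_swap(2)[of p1 z x]
  by (simp add: insert_commute)

lemma quad_distinct: "quad p1 p2 p3 z x y \<Longrightarrow> distinct [p1, p2, p3, z, x, y]"
  unfolding quad_def using three_lines_distinct[of z p1 p2 p3 x y] by (auto simp: is_line_def)

lemma quad_not_col: "quad p1 p2 p3 z x y \<Longrightarrow> \<not> col z p3"
  unfolding quad_def
  using col_exactly_one[of p1 p2 p3 z] is_line_col[of p1 z x] is_line_col[of p2 z y]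
  by (simp add: fcollinear_commute)

lemma quad_complete_quadrilateral:
  "quad p1 p2 p3 z x y \<Longrightarrow> complete_quadrilateral G D {p1, p2, p3, z, x, y}"
  unfolding quad_def using generated_hexagon by metis

lemma basis_prod_apply:
  assumes "p \<noteq> t"
  shows "(basis_prod G D p q t :: 'r::comm_ring_1) = (if col p t then pt t q + pt (wedge p t) q else 0)"
proof (cases "col p q")
  case True
  have "t = wedge p q \<longleftrightarrow> col p t \<and> q = wedge p t"
  proof
    assume "t = wedge p q"
    then have "is_line p t q" using is_line_swap(2)[OF is_line_wedgeI[OF True]] by simp
    then show "col p t \<and> q = wedge p t" using is_line_col is_line_wedge by metis
  next
    assume "col p t \<and> q = wedge p t"
    then have "is_line p q t" using is_line_swap(2)[OF is_line_wedgeI[of p t]] by simp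
    then show "t = wedge p q" using is_line_wedge by metis
  qed
  then show ?thesis using True assms by (auto simp: basis_prod_def pt_def)
next
  case False
  have "\<not> (col p t \<and> q = wedge p t)"
  proof
    assume "col p t \<and> q = wedge p t"
    then have "is_line p q t" using is_line_swap(2)[OF is_line_wedgeI[of p t]] by simp
    then show False using False is_line_col by metis
  qed
  then show ?thesis using False by (auto simp: basis_prod_def pt_def)
qed

end

section \<open>Complete quadrilaterals through a line\<close>

locale symplectic_fischer_space_line = symplectic_fischer_space G D
  for G :: "('g, 'b) monoid_scheme" and D :: "'g set" +
  fixes l :: "'g set"
  assumes line: "l \<in> fischer_lines G D"
begin

definition P0 :: "'g set" where
  "P0 = {w \<in> D. w \<notin> l \<and> (\<forall>p\<in>l. \<not> col w p)}"

definition P2 :: "'g set" where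
  "P2 = {z \<in> D. z \<notin> l \<and> card {p \<in> l. col z p} = 2}"

definition quads :: "'g set set" where
  "quads = {\<pi>. complete_quadrilateral G D \<pi> \<and> l \<subseteq> \<pi>}"

definition quad_through :: "'g \<Rightarrow> 'g set" where
  "quad_through z = insert z (l \<union> {wedge p z |p. p \<in> l \<and> col p z})"

lemma finite_line: "finite l"
  using fischer_linesD[OF line] by (simp add: card_ge_0_finite)

lemma lineE:
  assumes "p \<in> l"
  obtains q r where "l = {p, q, r}" "is_line p q r"
proof -
  obtain q r where qr: "l = {p, q, r}" "p \<noteq> q" "q \<noteq> r" "p \<noteq> r"
    using card_3E fischer_linesD[OF line] assms by metis
  then have "is_line p q r" using line unfolding is_line_def by simp
  with qr(1) show ?thesis by (rule that)
qed

lemma col_line_quadE: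
  assumes z: "z \<notin> l" and p: "p \<in> l" "col z p"
  obtains p1 p2 p3 x y where "l = {p1, p2, p3}" "quad p1 p2 p3 z x y"
proof -
  obtain q r where l: "l = {p, q, r}" and L: "is_line p q r" using lineE[OF p(1)] .
  have zl: "z \<notin> {p, q, r}" using z l by simp
  show ?thesis
  proof (cases "col z q")
    case True
    show ?thesis by (rule that[OF l quad_completion[OF L zl p(2) True]])
  next
    case False
    then have "col z r" using col_exactly_one[OF L zl p(2)] by simp
    moreover have "l = {p, r, q}" "z \<notin> {p, r, q}" using l zl by auto
    ultimately show ?thesis
      using that quad_completion[OF is_line_swap(2)[OF L], of z] p(2) by blast
  qed
qed

lemma quad_col_line:
  assumes "l = {p1, p2, p3}" "quad p1 p2 p3 z x y"
  shows "{p \<in> l. col z p} = {p1, p2}"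
proof -
  have "col z p1" "col z p2"
    using assms(2) is_line_col[of p1 z x] is_line_col[of p2 z y]
    unfolding quad_def by (simp_all add: fcollinear_commute)
  then show ?thesis using quad_not_col[OF assms(2)] assms(1) by auto
qed

lemma P2_iff: "z \<in> P2 \<longleftrightarrow> z \<in> D \<and> z \<notin> l \<and> (\<exists>p\<in>l. col z p)"
proof
  assume z: "z \<in> P2"
  then have "card {p \<in> l. col z p} = 2" unfolding P2_def by simp
  then have "{p \<in> l. col z p} \<noteq> {}" by (metis card.empty zero_neq_numeral)
  moreover have "z \<in> D" "z \<notin> l" using z unfolding P2_def by auto
  ultimately show "z \<in> D \<and> z \<notin> l \<and> (\<exists>p\<in>l. col z p)" by blast
next
  assume z: "z \<in> D \<and> z \<notin> l \<and> (\<exists>p\<in>l. col z p)"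
  then obtain p1 p2 p3 x y where "l = {p1, p2, p3}" "quad p1 p2 p3 z x y"
    using col_line_quadE by metis
  then have "card {p \<in> l. col z p} = 2"
    using quad_col_line quad_distinct by (simp add: card_insert_if)
  then show "z \<in> P2" using z unfolding P2_def by simp
qed

lemma P2E:
  assumes "z \<in> P2"
  obtains p1 p2 p3 x y where "l = {p1, p2, p3}" "quad p1 p2 p3 z x y"
  using assms col_line_quadE unfolding P2_iff by metis

lemma quad_in_P2: "l = {p1, p2, p3} \<Longrightarrow> quad p1 p2 p3 z x y \<Longrightarrow> z \<in> P2"
  unfolding P2_iff quad_def
  using is_line_in_D[of p1 z x] is_line_col[of p1 z x] by (auto simp: fcollinear_commute)

lemma P0_or_P2: "z \<in> D \<Longrightarrow> z \<notin> l \<Longrightarrow> z \<in> P0 \<or> z \<in> P2"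
  unfolding P0_def P2_iff by blast

lemma P0_not_P2: "z \<in> P0 \<Longrightarrow> z \<notin> P2"
  unfolding P0_def P2_iff by blast

lemma quad_through_eq:
  assumes l: "l = {p1, p2, p3}" and q: "quad p1 p2 p3 z x y"
  shows "quad_through z = {p1, p2, p3, z, x, y}"
proof -
  have "col p1 z" "wedge p1 z = x" "col p2 z" "wedge p2 z = y"
    using q is_line_col[of p1 z x] is_line_col[of p2 z y] is_line_wedge[of p1 z x] is_line_wedge[of p2 z y]
    unfolding quad_def by auto
  moreover have "\<not> col p3 z" using quad_not_col[OF q] by (simp add: fcollinear_commute)
  ultimately have "{wedge p z |p. p \<in> l \<and> col p z} = {x, y}" using l by auto
  then show ?thesis unfolding quad_through_def using l by auto
qed

lemma finite_quad_through: "finite (quad_through z)"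
  unfolding quad_through_def using finite_line by auto

lemma quad_through_in_quads:
  assumes "z \<in> P2"
  shows "quad_through z \<in> quads"
proof -
  obtain p1 p2 p3 x y where l: "l = {p1, p2, p3}" and q: "quad p1 p2 p3 z x y"
    using assms by (rule P2E)
  show ?thesis
    unfolding quads_def mem_Collect_eq quad_through_eq[OF l q]
    using quad_complete_quadrilateral[OF q] l by auto
qed

lemma quads_eq_quad_through:
  assumes \<pi>: "\<pi> \<in> quads" and z: "z \<in> \<pi>" "z \<notin> l"
  shows "z \<in> P2" "\<pi> = quad_through z"
proof -
  have cq: "complete_quadrilateral G D \<pi>" and l: "l \<subseteq> \<pi>" using \<pi> unfolding quads_def by auto
  note C = complete_quadrilateralD[OF cq]
  have "card {n \<in> fischer_lines G D. n \<subseteq> \<pi> \<and> z \<in> n} = 2" by (rule C(5)[OF z(1)])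
  then obtain n where n: "n \<in> fischer_lines G D" "n \<subseteq> \<pi>" "z \<in> n"
    by (metis (no_types, lifting) card.empty empty_Collect_eq zero_neq_numeral)
  have "n \<noteq> l" using n(3) z(2) by auto
  then have "card (n \<inter> l) = 1" by (rule C(4)[OF n(1,2) line l])
  then obtain p where p: "p \<in> n" "p \<in> l" by (auto simp: card_1_singleton_iff)
  have "col z p" using n(1,3) p z(2) unfolding fcollinear_def by auto
  moreover have "z \<in> D" using C(1) z(1) unfolding fsubspace_def by auto
  ultimately show zP2: "z \<in> P2" unfolding P2_iff using z(2) p(2) by blast
  then obtain p1 p2 p3 x y where l3: "l = {p1, p2, p3}" and q: "quad p1 p2 p3 z x y" by (rule P2E)
  have "x \<in> \<pi>" "y \<in> \<pi>"
    using q l l3 z(1) fsubspace_wedge[OF C(1), of p1 z] fsubspace_wedge[OF C(1), of p2 z]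
      is_line_col[of p1 z x] is_line_col[of p2 z y] is_line_wedge[of p1 z x] is_line_wedge[of p2 z y]
    unfolding quad_def by auto
  then have sub: "{p1, p2, p3, z, x, y} \<subseteq> \<pi>" using l l3 z(1) by auto
  have "card {p1, p2, p3, z, x, y} = card \<pi>"
    using quad_distinct[OF q] C(3) by (simp add: card_insert_if)
  then have "{p1, p2, p3, z, x, y} = \<pi>" by (rule card_subset_eq[OF C(2) sub])
  then show "\<pi> = quad_through z" using quad_through_eq[OF l3 q] by simp
qed

lemma quads_subset: "\<pi> \<in> quads \<Longrightarrow> \<pi> \<subseteq> l \<union> P2"
  using quads_eq_quad_through(1) by blast

lemma quads_finite_subset: "\<pi> \<in> quads \<Longrightarrow> finite \<pi> \<and> \<pi> \<subseteq> D"
  unfolding quads_def using complete_quadrilateralD(1,2) by (auto simp: fsubspace_def)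

lemma quads_point_off_line:
  assumes "\<pi> \<in> quads"
  obtains z where "z \<in> \<pi>" "z \<notin> l"
proof (rule ccontr)
  assume "\<not> thesis"
  then have "\<pi> \<subseteq> l" using that by blast
  then have "card \<pi> \<le> 3" using card_mono[OF finite_line] fischer_linesD[OF line] by metis
  then show False using assms complete_quadrilateralD(3) unfolding quads_def by fastforce
qed

lemma mem_quad_through_iff:
  assumes "z \<in> P2" "t \<notin> l"
  shows "t \<in> quad_through z \<longleftrightarrow> t \<in> P2 \<and> quad_through t = quad_through z"
  using quads_eq_quad_through[OF quad_through_in_quads[OF assms(1)] _ assms(2)]
  unfolding quad_through_def by auto


subsection \<open>The adjoint action of the line\<close>

abbreviation ad :: "('g \<Rightarrow> 'r::comm_ring_1) \<Rightarrow> 'g \<Rightarrow> 'r" where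
  "ad \<equiv> mprod G D (setvec l)"

lemma ad_pt_apply: "ad (pt q) t = (\<Sum>p\<in>l. (basis_prod G D p q t :: 'r::comm_ring_1))"
  by (rule mprod_setvec_pt[OF finite_line])

lemma ad_as_lincomb:
  fixes v :: "'g \<Rightarrow> 'r::comm_ring_1"
  assumes "finite (supp v)"
  shows "ad v = (\<lambda>t. \<Sum>q\<in>supp v. v q * ad (pt q) t)"
  using mprod_expand_right[OF assms order_refl] by blast

lemma ad_pt_line:
  assumes char2: "(2::'r::comm_ring_1) = 0" and p: "p \<in> l"
  shows "ad (pt p :: 'g \<Rightarrow> 'r) = (\<lambda>t. 0)"
proof
  fix t
  obtain q r where l: "l = {p, q, r}" and L: "is_line p q r" using lineE[OF p] .
  have Lq: "is_line q p r" and Lr: "is_line r p q"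
    using is_line_swap(1)[OF L] is_line_swap(1)[OF is_line_swap(2)[OF L]] .
  have "ad (pt p) t = basis_prod G D p p t + (basis_prod G D q p t + basis_prod G D r p t)"
    using L unfolding ad_pt_apply unfolding l is_line_def by simp
  also have "\<dots> = (pt q t + pt p t + pt r t) + (pt r t + pt p t + pt q t)"
    using is_line_col[OF Lq] is_line_wedge[OF Lq] is_line_col[OF Lr] is_line_wedge[OF Lr]
    by (simp add: basis_prod_def fcollinear_irrefl)
  also have "\<dots> = (0 :: 'r)" by (simp add: ac_simps char2_cancel[OF char2])
  finally show "ad (pt p) t = (0 :: 'r)" .
qed

lemma ad_pt_eq_0:
  assumes char2: "(2::'r::comm_ring_1) = 0" and q: "q \<notin> P2"
  shows "ad (pt q :: 'g \<Rightarrow> 'r) = (\<lambda>t. 0)"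
proof (cases "q \<in> l")
  case True
  then show ?thesis by (rule ad_pt_line[OF char2])
next
  case False
  then have "\<not> col p q" if "p \<in> l" for p
    using q that fcollinear_in_D[of G D q p] unfolding P2_iff by (auto simp: fcollinear_commute)
  then show ?thesis by (auto simp: ad_pt_apply basis_prod_def intro!: sum.neutral)
qed

lemma ad_pt_quad:
  assumes char2: "(2::'r::comm_ring_1) = 0" and l: "l = {p1, p2, p3}" and q: "quad p1 p2 p3 z x y"
  shows "ad (pt z :: 'g \<Rightarrow> 'r) = (\<lambda>t. pt p1 t + pt p2 t + pt x t + pt y t)"
proof
  fix t
  have m: "is_line p1 z x" and n: "is_line p2 z y" using q unfolding quad_def by simp_all
  have "distinct [p1, p2, p3, z, x, y]" by (rule quad_distinct[OF q])
  then have "ad (pt z) t = basis_prod G D p1 z t + (basis_prod G D p2 z t + basis_prod G D p3 z t)"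
    unfolding ad_pt_apply unfolding l by simp
  also have "\<dots> = (pt p1 t + pt z t + pt x t) + (pt p2 t + pt z t + pt y t)"
    using is_line_col[OF m] is_line_wedge[OF m] is_line_col[OF n] is_line_wedge[OF n]
      quad_not_col[OF q] by (simp add: basis_prod_def fcollinear_commute)
  also have "\<dots> = (pt p1 t + pt p2 t + pt x t + pt y t :: 'r)"
    by (simp add: ac_simps char2_cancel[OF char2])
  finally show "ad (pt z) t = (pt p1 t + pt p2 t + pt x t + pt y t :: 'r)" .
qed

lemma ad_pt_in_matsuo_carrier:
  assumes char2: "(2::'r::comm_ring_1) = 0"
  shows "ad (pt q :: 'g \<Rightarrow> 'r) \<in> matsuo_carrier D"
proof (cases "q \<in> P2")
  case True
  then obtain p1 p2 p3 x y where l: "l = {p1, p2, p3}" and q: "quad p1 p2 p3 q x y" by (rule P2E)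
  then have "p1 \<in> D" "p2 \<in> D" "x \<in> D" "y \<in> D"
    using is_line_in_D[of p1 q x] is_line_in_D[of p2 q y] unfolding quad_def by auto
  then show ?thesis
    unfolding ad_pt_quad[OF char2 l q] by (intro matsuo_carrier_add pt_in_matsuo_carrier)
next
  case False
  then show ?thesis by (simp add: ad_pt_eq_0[OF char2] matsuo_carrier_def supp_def)
qed

lemma ad_in_matsuo_carrier:
  assumes char2: "(2::'r::comm_ring_1) = 0" and v: "v \<in> matsuo_carrier D"
  shows "ad (v :: 'g \<Rightarrow> 'r) \<in> matsuo_carrier D"
  using v unfolding ad_as_lincomb[OF v[unfolded matsuo_carrier_def, THEN CollectD, THEN conjunct1]]
  by (intro matsuo_carrier_lincomb ad_pt_in_matsuo_carrier[OF char2]) (simp add: matsuo_carrier_def)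

lemma ad_ad_pt:
  assumes char2: "(2::'r::comm_ring_1) = 0"
  shows "ad (ad (pt q :: 'g \<Rightarrow> 'r)) = ad (pt q)"
proof (cases "q \<in> P2")
  case True
  then obtain p1 p2 p3 x y where l: "l = {p1, p2, p3}" and q: "quad p1 p2 p3 q x y" by (rule P2E)
  have d: "distinct [p1, p2, p3, q, x, y]" by (rule quad_distinct[OF q])
  have eq: "ad (pt q) = (\<lambda>t. \<Sum>s\<in>{p1, p2, x, y}. 1 * (pt s t :: 'r))"
    using d by (simp add: ad_pt_quad[OF char2 l q] ac_simps)
  have "ad (ad (pt q)) = (\<lambda>t. \<Sum>s\<in>{p1, p2, x, y}. 1 * (ad (pt s) t :: 'r))"
    unfolding eq by (rule mprod_lincomb_right) simp_all
  also have "\<dots> = (\<lambda>t. ad (pt x) t + ad (pt y) t)"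
  proof -
    have "p1 \<in> l" "p2 \<in> l" using l by simp_all
    then show ?thesis using d by (simp add: ad_pt_line[OF char2])
  qed
  also have "\<dots> = ad (pt q)"
  proof -
    have "l = {p1, p3, p2}" "l = {p2, p3, p1}" using l by auto
    then show ?thesis
      using ad_pt_quad[OF char2 _ quad_swap23[OF q]] ad_pt_quad[OF char2 _ quad_swap23[OF quad_swap12[OF q]]]
        ad_pt_quad[OF char2 l q]
      by (simp add: ac_simps char2_cancel[OF char2])
  qed
  finally show ?thesis .
next
  case False
  then show ?thesis by (simp add: ad_pt_eq_0[OF char2] mprod_zero_right)
qed

lemma ad_idem:
  assumes char2: "(2::'r::comm_ring_1) = 0" and v: "v \<in> matsuo_carrier D"
  shows "ad (ad (v :: 'g \<Rightarrow> 'r)) = ad v"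
proof -
  have fin: "finite (supp v)" using v by (simp add: matsuo_carrier_def)
  have "ad (ad v) = (\<lambda>t. \<Sum>q\<in>supp v. v q * ad (ad (pt q)) t)"
    unfolding ad_as_lincomb[OF fin] using fin ad_pt_in_matsuo_carrier[OF char2]
    by (intro mprod_lincomb_right) (auto simp: matsuo_carrier_def)
  also have "\<dots> = ad v" unfolding ad_as_lincomb[OF fin] ad_ad_pt[OF char2] ..
  finally show ?thesis .
qed

lemma ad_apply_off_line:
  fixes v :: "'g \<Rightarrow> 'r::comm_ring_1"
  assumes fin: "finite (supp v)" and t: "t \<notin> l"
  shows "ad v t = (\<Sum>p\<in>l. if col p t then v t + v (wedge p t) else 0)"
proof -
  define T where "T = supp v \<union> insert t ((\<lambda>p. wedge p t) ` l)"
  have T: "finite T" "supp v \<subseteq> T" "t \<in> T" "\<And>p. p \<in> l \<Longrightarrow> wedge p t \<in> T"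
    using fin finite_line unfolding T_def by auto
  have "ad v t = (\<Sum>q\<in>T. v q * (\<Sum>p\<in>l. basis_prod G D p q t))"
    unfolding mprod_expand_right[OF T(1,2)] ad_pt_apply ..
  also have "\<dots> = (\<Sum>p\<in>l. \<Sum>q\<in>T. v q * basis_prod G D p q t)"
    by (simp add: sum_distrib_left sum.swap[of _ T])
  also have "\<dots> = (\<Sum>p\<in>l. if col p t then v t + v (wedge p t) else 0)"
  proof (rule sum.cong[OF refl])
    fix p assume p: "p \<in> l"
    then have "p \<noteq> t" using t by auto
    then show "(\<Sum>q\<in>T. v q * basis_prod G D p q t) = (if col p t then v t + v (wedge p t) else 0)"
      using T(1,3) T(4)[OF p] by (simp add: basis_prod_apply distrib_left sum.distrib pt_commute[of t] pt_commute[of "wedge p t"]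
          sum_mult_pt)
  qed
  finally show ?thesis .
qed

lemma ad_apply_quad:
  fixes v :: "'g \<Rightarrow> 'r::comm_ring_1"
  assumes char2: "(2::'r) = 0" and fin: "finite (supp v)"
    and l: "l = {p1, p2, p3}" and q: "quad p1 p2 p3 z x y"
  shows "ad v z = v x + v y"
proof -
  have m: "is_line p1 z x" and n: "is_line p2 z y" and z: "z \<notin> l"
    using q l unfolding quad_def by simp_all
  have "distinct [p1, p2, p3, z, x, y]" by (rule quad_distinct[OF q])
  then have "ad v z = (v z + v x) + ((v z + v y) + 0)"
    using is_line_col[OF m] is_line_wedge[OF m] is_line_col[OF n] is_line_wedge[OF n] quad_not_col[OF q]
    unfolding ad_apply_off_line[OF fin z] unfolding l by (simp add: fcollinear_commute)
  also have "\<dots> = v x + v y" by (simp add: ac_simps char2_cancel[OF char2])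
  finally show ?thesis .
qed

lemma ad_kernel_constant_on_quad:
  fixes v :: "'g \<Rightarrow> 'r::comm_ring_1"
  assumes char2: "(2::'r) = 0" and fin: "finite (supp v)" and v: "ad v = (\<lambda>t. 0)"
    and l: "l = {p1, p2, p3}" and q: "quad p1 p2 p3 z x y"
  shows "v x = v z" "v y = v z"
proof -
  have "v x + v y = 0" using ad_apply_quad[OF char2 fin l q] v by simp
  moreover have "v z + v y = 0"
    using ad_apply_quad[OF char2 fin _ quad_swap23[OF q]] v l by (simp add: insert_commute)
  ultimately show "v x = v z" "v y = v z" by (simp_all add: char2_add_eq_0_iff[OF char2])
qed

lemma ad_setvec_quad:
  assumes char2: "(2::'r::comm_ring_1) = 0" and \<pi>: "\<pi> \<in> quads"
  shows "ad (setvec \<pi> :: 'g \<Rightarrow> 'r) = (\<lambda>t. 0)"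
proof -
  obtain z where z: "z \<in> \<pi>" "z \<notin> l" using quads_point_off_line[OF \<pi>] .
  then have "z \<in> P2" "\<pi> = quad_through z" using quads_eq_quad_through[OF \<pi>] by auto
  then obtain p1 p2 p3 x y where l: "l = {p1, p2, p3}" and q: "quad p1 p2 p3 z x y"
    and \<pi>_eq: "\<pi> = {p1, p2, p3, z, x, y}"
    using quad_through_eq by (metis P2E)
  have d: "distinct [p1, p2, p3, z, x, y]" by (rule quad_distinct[OF q])
  have sv: "setvec \<pi> = (\<lambda>t. \<Sum>s\<in>\<pi>. 1 * (pt s t :: 'r))" by (simp add: setvec_def)
  have "ad (setvec \<pi> :: 'g \<Rightarrow> 'r) = (\<lambda>t. \<Sum>s\<in>\<pi>. 1 * ad (pt s) t)"
    unfolding sv using quads_finite_subset[OF \<pi>] by (intro mprod_lincomb_right) simp_all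
  also have "\<dots> = (\<lambda>t. ad (pt z) t + ad (pt x) t + ad (pt y) t)"
  proof -
    have "p1 \<in> l" "p2 \<in> l" "p3 \<in> l" using l by simp_all
    then show ?thesis using d unfolding \<pi>_eq by (simp add: ad_pt_line[OF char2] add.assoc)
  qed
  also have "\<dots> = (\<lambda>t. 0)"
  proof -
    have "l = {p1, p3, p2}" "l = {p2, p3, p1}" using l by auto
    then show ?thesis
      using ad_pt_quad[OF char2 _ quad_swap23[OF q]] ad_pt_quad[OF char2 _ quad_swap23[OF quad_swap12[OF q]]]
        ad_pt_quad[OF char2 l q]
      by (simp add: ac_simps char2_cancel[OF char2])
  qed
  finally show ?thesis .
qed


lemma ad_eigenspace_decomposition:
  assumes char2: "(2::'r::comm_ring_1) = 0"
  shows "is_direct_sum [{v \<in> matsuo_carrier D. ad v = (\<lambda>t. 0)}, {v \<in> matsuo_carrier D. ad v = v}]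
           (matsuo_carrier D :: ('g \<Rightarrow> 'r) set)"
proof (rule is_direct_sum_kernel_fixed_points)
  fix u w :: "'g \<Rightarrow> 'r" assume u: "u \<in> matsuo_carrier D" and w: "w \<in> matsuo_carrier D"
  then show "(\<lambda>t. u t + w t) \<in> matsuo_carrier D" "(\<lambda>t. u t - w t) \<in> matsuo_carrier D"
    by (simp_all add: matsuo_carrier_add matsuo_carrier_diff)
  show "ad (\<lambda>t. u t + w t) = (\<lambda>t. ad u t + ad w t)"
    using u w by (simp add: mprod_add_right matsuo_carrier_def)
next
  fix v :: "'g \<Rightarrow> 'r" assume "v \<in> matsuo_carrier D"
  then show "ad v \<in> matsuo_carrier D" "ad (ad v) = ad v"
    by (simp_all add: ad_in_matsuo_carrier[OF char2] ad_idem[OF char2])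
qed

lemma ad_fixed_points_eq_rspan:
  assumes char2: "(2::'r::comm_ring_1) = 0"
  shows "{v \<in> matsuo_carrier D. ad v = v} = rspan ((\<lambda>z. ad (pt z :: 'g \<Rightarrow> 'r)) ` P2)"
proof (intro equalityI subsetI)
  fix v :: "'g \<Rightarrow> 'r" assume "v \<in> {v \<in> matsuo_carrier D. ad v = v}"
  then have fin: "finite (supp v)" and fixed: "ad v = v" by (simp_all add: matsuo_carrier_def)
  have "v = (\<lambda>t. \<Sum>q\<in>supp v. v q * ad (pt q) t)" using ad_as_lincomb[OF fin] fixed by simp
  also have "\<dots> = (\<lambda>t. \<Sum>q\<in>supp v \<inter> P2. v q * ad (pt q) t)"
    using fin by (intro ext sum.mono_neutral_right) (auto simp: ad_pt_eq_0[OF char2])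
  also have "\<dots> \<in> rspan ((\<lambda>z. ad (pt z)) ` P2)"
    using fin by (intro lincomb_in_rspan) auto
  finally show "v \<in> rspan ((\<lambda>z. ad (pt z)) ` P2)" .
next
  fix u :: "'g \<Rightarrow> 'r" assume u: "u \<in> rspan ((\<lambda>z. ad (pt z)) ` P2)"
  have S: "(\<lambda>z. ad (pt z :: 'g \<Rightarrow> 'r)) ` P2 \<subseteq> matsuo_carrier D"
    using ad_pt_in_matsuo_carrier[OF char2] by blast
  have "ad u = (\<lambda>x. 1 * u x)"
    using S ad_ad_pt[OF char2] by (intro mprod_rspan_eigen[OF u]) (auto simp: matsuo_carrier_def)
  then show "u \<in> {v \<in> matsuo_carrier D. ad v = v}"
    using rspan_subset_matsuo_carrier[OF S] u by auto
qed

text \<open>Each quadrilateral through \<open>\<ell>\<close> and \<open>t\<close> is counted once for each of its three points off \<open>\<ell>\<close>,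
  on which \<open>v\<close> is constant, and \<open>3 = 1\<close> in \<open>R\<close>.\<close>

lemma sum_setvec_quad_through:
  fixes v :: "'g \<Rightarrow> 'r::comm_ring_1"
  assumes char2: "(2::'r) = 0" and fin: "finite (supp v)" and ker: "ad v = (\<lambda>t. 0)" and t: "t \<in> P2"
  shows "(\<Sum>z\<in>supp v \<inter> P2. v z * setvec (quad_through z) t) = v t"
proof -
  obtain p1 p2 p3 x y where l: "l = {p1, p2, p3}" and q: "quad p1 p2 p3 t x y" using t by (rule P2E)
  have tl: "t \<notin> l" using t unfolding P2_iff by simp
  have "l = {p1, p3, p2}" "l = {p2, p3, p1}" using l by auto
  then have txy: "{t, x, y} \<subseteq> P2"
    using t quad_in_P2[OF _ quad_swap23[OF q]] quad_in_P2[OF _ quad_swap23[OF quad_swap12[OF q]]] by auto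
  have mem: "t \<in> quad_through z \<longleftrightarrow> z \<in> {t, x, y}" if z: "z \<in> P2" for z
  proof -
    have zl: "z \<notin> l" using z unfolding P2_iff by simp
    have "t \<in> quad_through z \<longleftrightarrow> quad_through t = quad_through z"
      using mem_quad_through_iff[OF z tl] t by simp
    also have "\<dots> \<longleftrightarrow> z \<in> quad_through t" using mem_quad_through_iff[OF t zl] z by auto
    also have "\<dots> \<longleftrightarrow> z \<in> {t, x, y}" using zl[unfolded l] unfolding quad_through_eq[OF l q] by auto
    finally show ?thesis .
  qed
  have "(\<Sum>z\<in>supp v \<inter> P2. v z * setvec (quad_through z) t) = (\<Sum>z\<in>supp v \<inter> P2. if z \<in> {t, x, y} then v z else 0)"
    by (intro sum.cong refl) (auto simp: setvec_apply[OF finite_quad_through] mem)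
  also have "\<dots> = (\<Sum>z\<in>supp v \<inter> P2 \<inter> {t, x, y}. v z)" using fin by (simp add: sum.inter_restrict)
  also have "\<dots> = (\<Sum>z\<in>{t, x, y}. v z)"
    using txy by (intro sum.mono_neutral_left) (auto simp: supp_def)
  also have "\<dots> = v t + (v x + v y)" using quad_distinct[OF q] by simp
  also have "\<dots> = v t" using ad_kernel_constant_on_quad[OF char2 fin ker l q] by (simp add: char2_cancel[OF char2])
  finally show ?thesis .
qed

lemma ad_kernel_decompose:
  fixes v :: "'g \<Rightarrow> 'r::comm_ring_1"
  assumes char2: "(2::'r) = 0" and v: "v \<in> matsuo_carrier D" and ker: "ad v = (\<lambda>t. 0)"
  obtains u1 u2 u3 where "u1 \<in> rspan (pt ` l)" "u2 \<in> rspan (setvec ` quads)" "u3 \<in> rspan (pt ` P0)"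
    and "v = (\<lambda>t. u1 t + (u2 t + u3 t))"
proof -
  have fin: "finite (supp v)" and supp: "supp v \<subseteq> D" using v by (simp_all add: matsuo_carrier_def)
  define u3 where "u3 = (\<lambda>t. \<Sum>q\<in>supp v \<inter> P0. v q * pt q t)"
  define u2 where "u2 = (\<lambda>t. \<Sum>z\<in>supp v \<inter> P2. v z * setvec (quad_through z) t)"
  define u1 where "u1 = (\<lambda>t. \<Sum>p\<in>l. (v p - (u2 p + u3 p)) * pt p t)"
  have "u1 \<in> rspan (pt ` l)" unfolding u1_def using finite_line by (intro lincomb_in_rspan) auto
  moreover have "u2 \<in> rspan (setvec ` quads)"
    unfolding u2_def using fin quad_through_in_quads by (intro lincomb_in_rspan) auto
  moreover have "u3 \<in> rspan (pt ` P0)" unfolding u3_def using fin by (intro lincomb_in_rspan) auto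
  moreover have "v t = u1 t + (u2 t + u3 t)" for t
  proof (cases "t \<in> l")
    case True
    then show ?thesis unfolding u1_def by (simp add: sum_mult_pt finite_line)
  next
    case False
    have u1: "u1 t = 0" unfolding u1_def using False by (simp add: sum_mult_pt finite_line)
    have u3: "u3 t = (if t \<in> P0 then v t else 0)"
      unfolding u3_def using fin by (simp add: sum_mult_pt) (auto simp: supp_def)
    show ?thesis
    proof (cases "t \<in> P2")
      case True
      then have "u2 t = v t" unfolding u2_def by (rule sum_setvec_quad_through[OF char2 fin ker])
      moreover have "t \<notin> P0" using True P0_not_P2 by blast
      ultimately show ?thesis using u1 u3 by simp
    next
      case notP2: False
      have "u2 t = 0" unfolding u2_def
      proof (intro sum.neutral ballI)
        fix z assume "z \<in> supp v \<inter> P2"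
        then have "t \<notin> quad_through z" using quads_subset[OF quad_through_in_quads] False notP2 by blast
        then show "v z * setvec (quad_through z) t = 0" by (simp add: setvec_apply[OF finite_quad_through])
      qed
      moreover have "v t = 0" if "t \<notin> P0" using P0_or_P2[of t] False notP2 supp that unfolding supp_def by blast
      ultimately show ?thesis using u1 u3 by auto
    qed
  qed
  then have "v = (\<lambda>t. u1 t + (u2 t + u3 t))" by (rule ext)
  ultimately show ?thesis by (rule that)
qed

lemma rspan_quads_eq_0:
  fixes u :: "'g \<Rightarrow> 'r::comm_ring_1"
  assumes u: "u \<in> rspan (setvec ` quads)" and vanish: "\<And>z. z \<in> P2 \<Longrightarrow> u z = 0"
  shows "u = (\<lambda>t. 0)"
proof -
  obtain F c where F: "finite F" "F \<subseteq> setvec ` quads" and u_eq: "u = (\<lambda>x. \<Sum>s\<in>F. c s * s x)"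
    using u unfolding rspan_def by blast
  have "c s = 0" if s: "s \<in> F" for s
  proof -
    obtain \<pi> where \<pi>: "\<pi> \<in> quads" and s_eq: "s = setvec \<pi>" using F(2) s by blast
    obtain z where z: "z \<in> \<pi>" "z \<notin> l" using quads_point_off_line[OF \<pi>] .
    have "c s' * s' z = (if s' = s then c s' else 0)" if s': "s' \<in> F" for s'
    proof -
      obtain \<pi>' where \<pi>': "\<pi>' \<in> quads" and s'_eq: "s' = setvec \<pi>'" using F(2) s' by blast
      have val: "s' z = (if z \<in> \<pi>' then 1 else 0)" "s z = 1"
        using quads_finite_subset[OF \<pi>'] quads_finite_subset[OF \<pi>] z(1)
        by (simp_all add: s'_eq s_eq setvec_apply)
      have "z \<in> \<pi>' \<longleftrightarrow> s' = s"
      proof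
        assume "z \<in> \<pi>'"
        then have "\<pi>' = \<pi>"
          using quads_eq_quad_through(2)[OF \<pi>' _ z(2)] quads_eq_quad_through(2)[OF \<pi> z] by simp
        then show "s' = s" using s_eq s'_eq by simp
      next
        assume "s' = s"
        then show "z \<in> \<pi>'" using val by (auto split: if_splits)
      qed
      then show ?thesis using val(1) by simp
    qed
    then have "u z = c s" using F(1) s unfolding u_eq by (simp add: sum.delta)
    moreover have "u z = 0" using vanish quads_eq_quad_through(1)[OF \<pi> z] by simp
    ultimately show ?thesis by simp
  qed
  then show ?thesis unfolding u_eq by (intro ext sum.neutral) simp
qed

lemma ad_kernel_sum_unique:
  fixes u1 u2 u3 :: "'g \<Rightarrow> 'r::comm_ring_1"
  assumes u1: "u1 \<in> rspan (pt ` l)" and u2: "u2 \<in> rspan (setvec ` quads)" and u3: "u3 \<in> rspan (pt ` P0)"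
    and sum0: "(\<lambda>t. u1 t + (u2 t + u3 t)) = (\<lambda>t. 0)"
  shows "u1 = (\<lambda>t. 0) \<and> u2 = (\<lambda>t. 0) \<and> u3 = (\<lambda>t. 0)"
proof -
  have sum0t: "u1 t + (u2 t + u3 t) = 0" for t using fun_cong[OF sum0, of t] by simp
  have u1_off: "u1 t = 0" if "t \<notin> l" for t
    by (rule rspan_apply_eq_0[OF u1]) (use that in \<open>auto simp: pt_def\<close>)
  have u3_off: "u3 t = 0" if "t \<notin> P0" for t
    by (rule rspan_apply_eq_0[OF u3]) (use that in \<open>auto simp: pt_def\<close>)
  have u2_P0: "u2 t = 0" if t: "t \<in> P0" for t
  proof (rule rspan_apply_eq_0[OF u2])
    fix s :: "'g \<Rightarrow> 'r" assume "s \<in> setvec ` quads"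
    then obtain \<pi> where \<pi>: "\<pi> \<in> quads" and s: "s = setvec \<pi>" by blast
    have "t \<notin> \<pi>" using quads_subset[OF \<pi>] t P0_not_P2 unfolding P0_def by blast
    then show "s t = 0" using quads_finite_subset[OF \<pi>] by (simp add: s setvec_apply)
  qed
  have U3: "u3 = (\<lambda>t. 0)"
  proof
    fix t show "u3 t = 0"
    proof (cases "t \<in> P0")
      case True
      then have "t \<notin> l" unfolding P0_def by blast
      then show ?thesis using sum0t[of t] u1_off u2_P0[OF True] by simp
    qed (rule u3_off)
  qed
  have "u2 z = 0" if "z \<in> P2" for z
    using sum0t[of z] u1_off u3_off that P0_not_P2 unfolding P2_iff by force
  then have U2: "u2 = (\<lambda>t. 0)" by (rule rspan_quads_eq_0[OF u2])
  have "u1 = (\<lambda>t. 0)" using sum0 unfolding U2 U3 by simp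
  then show ?thesis using U2 U3 by simp
qed

lemma rspan_in_ad_kernel:
  assumes "S \<subseteq> matsuo_carrier D" "\<And>s. s \<in> S \<Longrightarrow> ad s = (\<lambda>t. 0 :: 'r::comm_ring_1)" "u \<in> rspan S"
  shows "u \<in> matsuo_carrier D \<and> ad (u :: 'g \<Rightarrow> 'r) = (\<lambda>t. 0)"
proof
  show "u \<in> matsuo_carrier D" using rspan_subset_matsuo_carrier[OF assms(1)] assms(3) by blast
  have "ad u = (\<lambda>x. 0 * u x)"
    using assms(1,2) by (intro mprod_rspan_eigen[OF assms(3)]) (auto simp: matsuo_carrier_def)
  then show "ad u = (\<lambda>t. 0)" by simp
qed

lemma ad_kernel_contains_sum:
  fixes u1 u2 u3 :: "'g \<Rightarrow> 'r::comm_ring_1"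
  assumes char2: "(2::'r) = 0"
    and u: "u1 \<in> rspan (pt ` l)" "u2 \<in> rspan (setvec ` quads)" "u3 \<in> rspan (pt ` P0)"
  shows "(\<lambda>t. u1 t + (u2 t + u3 t)) \<in> {v \<in> matsuo_carrier D. ad v = (\<lambda>t. 0)}"
proof -
  have S: "(pt :: 'g \<Rightarrow> 'g \<Rightarrow> 'r) ` l \<subseteq> matsuo_carrier D"
    "(setvec :: 'g set \<Rightarrow> 'g \<Rightarrow> 'r) ` quads \<subseteq> matsuo_carrier D"
    "(pt :: 'g \<Rightarrow> 'g \<Rightarrow> 'r) ` P0 \<subseteq> matsuo_carrier D"
    using fischer_linesD[OF line] quads_finite_subset
    by (auto simp: P0_def intro!: pt_in_matsuo_carrier setvec_in_matsuo_carrier)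
  have ad0: "ad (pt p) = (\<lambda>t. 0 :: 'r)" if "p \<in> l \<or> p \<in> P0" for p
    using that P0_not_P2[of p] P2_iff[of p] ad_pt_eq_0[OF char2, of p] by blast
  have k: "u1 \<in> matsuo_carrier D \<and> ad u1 = (\<lambda>t. 0)"
    "u2 \<in> matsuo_carrier D \<and> ad u2 = (\<lambda>t. 0)"
    "u3 \<in> matsuo_carrier D \<and> ad u3 = (\<lambda>t. 0)"
    by (rule rspan_in_ad_kernel[OF S(1) _ u(1)], use ad0 in blast)
      (rule rspan_in_ad_kernel[OF S(2) _ u(2)], use ad_setvec_quad[OF char2] in blast,
       rule rspan_in_ad_kernel[OF S(3) _ u(3)], use ad0 in blast)
  have A23: "(\<lambda>t. u2 t + u3 t) \<in> matsuo_carrier D" using k(2,3) by (simp add: matsuo_carrier_add)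
  have "finite (supp u1)" "finite (supp u2)" "finite (supp u3)" "finite (supp (\<lambda>t. u2 t + u3 t))"
    using k A23 by (simp_all add: matsuo_carrier_def)
  then have "ad (\<lambda>t. u1 t + (u2 t + u3 t)) = (\<lambda>t. 0)" using k by (simp add: mprod_add_right)
  then show ?thesis using matsuo_carrier_add[OF k(1)[THEN conjunct1] A23] by simp
qed

lemma ad_kernel_is_direct_sum:
  assumes char2: "(2::'r::comm_ring_1) = 0"
  shows "is_direct_sum [rspan (pt ` l), rspan (setvec ` quads), rspan (pt ` P0)]
           {v \<in> matsuo_carrier D. ad v = (\<lambda>t. 0 :: 'r)}"
proof (rule is_direct_sum_3I)
  show "{v \<in> matsuo_carrier D. ad v = (\<lambda>t. 0 :: 'r)} = {(\<lambda>t. u1 t + (u2 t + u3 t)) |u1 u2 u3.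
          u1 \<in> rspan (pt ` l) \<and> u2 \<in> rspan (setvec ` quads) \<and> u3 \<in> rspan (pt ` P0)}"
    using ad_kernel_decompose[OF char2] ad_kernel_contains_sum[OF char2] by blast
qed (rule ad_kernel_sum_unique)

end


theorem proposition5p19:
  fixes G :: "('g, 'b) monoid_scheme" and D :: "'g set" and a b c :: 'g
    and A A0 A1 :: "('g \<Rightarrow> 'r::comm_ring_1) set" and l :: "'g set"
    and P0 P2 :: "'g set" and ad :: "('g \<Rightarrow> 'r) \<Rightarrow> 'g \<Rightarrow> 'r"
  assumes "three_transposition_group G D"
    and "symplectic_type G D"
    and "(2::'r) = 0"
    and "{a, b, c} \<in> fischer_lines G D"
  defines "l \<equiv> {a, b, c}"
    and "A \<equiv> matsuo_carrier D"
    and "ad \<equiv> mprod G D (setvec l)"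
    and "A0 \<equiv> {v \<in> A. ad v = (\<lambda>x. 0)}"
    and "A1 \<equiv> {v \<in> A. ad v = v}"
    and "P0 \<equiv> {w \<in> D. w \<notin> l \<and> (\<forall>p\<in>l. \<not> fcollinear G D w p)}"
    and "P2 \<equiv> {z \<in> D. z \<notin> l \<and> card {p \<in> l. fcollinear G D z p} = 2}"
  shows "is_direct_sum [A0, A1] A \<and>
         is_direct_sum
           [rspan (pt ` l),
            rspan (setvec ` {\<pi>. complete_quadrilateral G D \<pi> \<and> l \<subseteq> \<pi>}),
            rspan (pt ` P0)] A0 \<and>
         A1 = rspan ((\<lambda>z. ad (pt z)) ` P2)"
proof -
  interpret L: symplectic_fischer_space_line G D l
    using assms(2,4) unfolding l_def by unfold_locales
  have "L.P0 = P0" "L.P2 = P2" "L.quads = {\<pi>. complete_quadrilateral G D \<pi> \<and> l \<subseteq> \<pi>}"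
    unfolding L.P0_def P0_def L.P2_def P2_def L.quads_def by simp_all
  then show ?thesis
    using L.ad_eigenspace_decomposition[OF assms(3)] L.ad_kernel_is_direct_sum[OF assms(3)]
      L.ad_fixed_points_eq_rspan[OF assms(3)]
    unfolding A0_def A1_def A_def ad_def by simp
qed

end
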